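(* Let $\Omega \subset \mathbb{R}^d$ with $d \ge 3$ be a bounded Lipschitz domain. Define the conformal Killing space $$\mathbf{CK}\coloneqq\{\boldsymbol{u}:\ \boldsymbol{u}(\mathbf{x}) = \mathbf{a} + \lambda\mathbf{x} + A\mathbf{x} + 2(\mathbf{b}\cdot\mathbf{x})\mathbf{x} - \|\mathbf{x}\|^2\mathbf{b}\ \text{ for } \mathbf{x}\in\Omega\},$$ where $\mathbf{a}, \mathbf{b} \in \mathbb{R}^d$, $\lambda \in \mathbb{R}$, and $A \in \mathbb{R}^{d\times d}$ is skew-symmetric. If $\boldsymbol{\varphi}\in \mathbf{CK}$ satisfies $\boldsymbol{\varphi}|_{\partial\Omega}=\mathbf{0}$, then $\boldsymbol{\varphi}=\mathbf{0}$ in $\Omega$.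
   Context: $\|\mathbf{x}\|$ denotes the Euclidean norm of $\mathbf{x}\in\mathbb{R}^d$. *)

theory Defs
  imports "HOL-Analysis.Analysis"
begin

definition lipschitz_domain :: "(real ^ 'n) set \<Rightarrow> bool" where
  "lipschitz_domain \<Omega> \<longleftrightarrow>
     open \<Omega> \<and> connected \<Omega> \<and> \<Omega> \<noteq> {} \<and>
     (\<forall>p \<in> frontier \<Omega>. \<exists>r > 0. \<exists>e :: real ^ 'n. \<exists>h :: real ^ 'n \<Rightarrow> real. \<exists>L.
        norm e = 1 \<and>
        L-lipschitz_on {y. y \<bullet> e = 0} h \<and>
        \<Omega> \<inter> ball p r = {x \<in> ball p r. x \<bullet> e < h (x - (x \<bullet> e) *\<^sub>R e)})"

definition ck_field ::
  "real ^ 'n \<Rightarrow> real \<Rightarrow> real ^ 'n ^ 'n \<Rightarrow> real ^ 'n \<Rightarrow> real ^ 'n \<Rightarrow> real ^ 'n" where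
  "ck_field a lam A b x =
     a + lam *\<^sub>R x + A *v x + (2 * (b \<bullet> x)) *\<^sub>R x - (norm x)\<^sup>2 *\<^sub>R b"

end

theory Submission
  imports Defs
begin

text \<open>Along a line x + t v the field \<phi> is a vector-valued quadratic polynomial in t whose
leading coefficient is the special conformal part 2 (b.v) v - |v|^2 b of \<phi>, i.e. the value at v
of the field with parameters a = 0, lambda = 0, A = 0. For x in \<Omega>, boundedness and openness
make the line leave \<Omega> on both sides of x, so the polynomial has roots t1 < 0 < t2 and hence
\<phi>(x) = t1 t2 (2 (b.v) v - |v|^2 b) for every direction v. Comparing the directions v and v + b
with v orthogonal to b forces \<phi>(x) = 0.\<close>

lemma ck_field_special_conformal:
  "ck_field 0 0 0 b v = (2 * (b \<bullet> v)) *\<^sub>R v - (norm v)\<^sup>2 *\<^sub>R b"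
  by (simp add: ck_field_def)

lemma ck_field_along_line:
  "ck_field a lam A b (x + t *\<^sub>R v) = ck_field a lam A b x
     + t *\<^sub>R (lam *\<^sub>R v + A *v v + (2 * (b \<bullet> v)) *\<^sub>R x + (2 * (b \<bullet> x)) *\<^sub>R v
              - (2 * (x \<bullet> v)) *\<^sub>R b)
     + t\<^sup>2 *\<^sub>R ck_field 0 0 0 b v"
proof -
  have "(norm (x + t *\<^sub>R v))\<^sup>2 = (norm x)\<^sup>2 + 2 * t * (x \<bullet> v) + t\<^sup>2 * (norm v)\<^sup>2"
    unfolding power2_norm_eq_inner
    by (simp add: inner_add_left inner_add_right inner_commute algebra_simps power2_eq_square
        del: inner_real_def)
  then show ?thesis
    unfolding ck_field_def
    by (simp add: algebra_simps inner_add inner_commute matrix_vector_right_distrib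
        power2_eq_square)
qed

lemma quadratic_two_roots_constant_term:
  fixes f :: "real \<Rightarrow> 'a::real_vector"
  assumes f: "\<And>t. f t = c0 + t *\<^sub>R c1 + t\<^sup>2 *\<^sub>R c2"
    and "f t1 = 0" and "f t2 = 0" and "t1 \<noteq> t2"
  shows "c0 = (t1 * t2) *\<^sub>R c2"
proof -
  have "t2 *\<^sub>R f t1 - t1 *\<^sub>R f t2 = 0"
    using assms(2,3) by simp
  then have "(t2 - t1) *\<^sub>R (c0 - (t1 * t2) *\<^sub>R c2) = 0"
    unfolding f by (simp add: algebra_simps power2_eq_square)
  then show ?thesis
    using assms(4) by simp
qed

lemma ck_field_multiple_of_special_conformal:
  assumes "bounded \<Omega>" and "x \<in> interior \<Omega>" and "v \<noteq> 0"
    and "\<forall>y \<in> frontier \<Omega>. ck_field a lam A b y = 0"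
  shows "\<exists>k. ck_field a lam A b x = k *\<^sub>R ck_field 0 0 0 b v"
proof -
  obtain t where "t > 0" and t: "x + t *\<^sub>R v \<in> frontier \<Omega>"
    using ray_to_frontier[OF assms(1,2,3)] by blast
  obtain s where "s > 0" and s: "x + s *\<^sub>R (- v) \<in> frontier \<Omega>"
    using ray_to_frontier[OF assms(1,2), of "- v"] assms(3) by auto
  have "ck_field a lam A b (x + (- s) *\<^sub>R v) = 0" and "ck_field a lam A b (x + t *\<^sub>R v) = 0"
    using s t assms(4) by auto
  moreover have "- s \<noteq> t"
    using \<open>s > 0\<close> \<open>t > 0\<close> by simp
  ultimately have "ck_field a lam A b x = (- s * t) *\<^sub>R ck_field 0 0 0 b v"
    by (rule quadratic_two_roots_constant_term[OF ck_field_along_line])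
  then show ?thesis ..
qed

lemma multiple_of_every_special_conformal_value_eq_0:
  fixes w b :: "real ^ 'n"
  assumes "CARD('n) \<ge> 2"
    and multiple: "\<And>v. v \<noteq> 0 \<Longrightarrow> \<exists>k. w = k *\<^sub>R ck_field 0 0 0 b v"
  shows "w = 0"
proof -
  obtain v :: "real ^ 'n" where "v \<noteq> 0" and "orthogonal b v"
    using orthogonal_to_vector_exists[of b] assms(1) by auto
  then have bv: "b \<bullet> v = 0" and "v \<bullet> v > 0"
    by (auto simp: orthogonal_def)
  obtain k where "w = k *\<^sub>R ck_field 0 0 0 b v"
    using multiple \<open>v \<noteq> 0\<close> by blast
  then have "w \<bullet> v = 0"
    using bv by (simp add: ck_field_special_conformal inner_diff_left inner_commute)
  have "(v + b) \<bullet> v = v \<bullet> v" and "b \<bullet> (v + b) = b \<bullet> b"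
    using bv by (simp_all add: inner_add_left inner_add_right inner_commute)
  then have "v + b \<noteq> 0"
    using \<open>v \<bullet> v > 0\<close> by auto
  then obtain k' where k': "w = k' *\<^sub>R ck_field 0 0 0 b (v + b)"
    using multiple by blast
  then have "w \<bullet> v = k' * (2 * (b \<bullet> b) * (v \<bullet> v))"
    using bv \<open>(v + b) \<bullet> v = v \<bullet> v\<close> \<open>b \<bullet> (v + b) = b \<bullet> b\<close>
    by (simp add: ck_field_special_conformal inner_diff_left)
  with \<open>w \<bullet> v = 0\<close> \<open>v \<bullet> v > 0\<close> have "k' = 0 \<or> b = 0"
    by simp
  then show ?thesis
    using k' by (auto simp: ck_field_special_conformal)
qed

theorem mainTheorem1:
  fixes \<Omega> :: "(real ^ 'n) set"
    and a b :: "real ^ 'n" and lam :: real and A :: "real ^ 'n ^ 'n"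
  assumes "CARD('n) \<ge> 3"
    and "bounded \<Omega>" and "lipschitz_domain \<Omega>"
    and "transpose A = - A"
    and "\<forall>x \<in> frontier \<Omega>. ck_field a lam A b x = 0"
  shows "\<forall>x \<in> \<Omega>. ck_field a lam A b x = 0"
proof
  fix x
  assume "x \<in> \<Omega>"
  moreover have "open \<Omega>"
    using assms(3) by (simp add: lipschitz_domain_def)
  ultimately have "x \<in> interior \<Omega>"
    by (simp add: interior_open)
  then show "ck_field a lam A b x = 0"
    using assms(1,2,5)
    by (intro multiple_of_every_special_conformal_value_eq_0[of _ b]
        ck_field_multiple_of_special_conformal) auto
qed

end
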